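(* Let $\ell\ge1$ be an integer and $p\in(0,1)$. Consider the random walk $(X_t)_{t\ge0}$ on $\mathbb{Z}_2^\ell$ with $X_0$ uniformly distributed on $\mathbb{Z}_2^\ell$, and let $T=\min\{t\ge 0: X_t=\mathbf{1}^\ell\}$, where $\mathbf{1}^\ell$ is the all-ones string. Then \[ \mathbb{E}[T]=\sum_{j=1}^{\ell}\binom{\ell}{j}\frac{1}{1-(1-2p)^j}. \]
   Context: $\mathbb{Z}_2^\ell$ is the group of bit strings of length $\ell$ with coordinatewise addition modulo 2. The random walk is defined by $X_{t+1}=X_t+W_{t+1}$, where $W_1,W_2,\dots$ are i.i.d., independent of $X_0$, and each $W_t$ has law $\mu(w)=p^{\|w\|}(1-p)^{\ell-\|w\|}$ with $\|w\|$ the number of ones in $w$; equivalently, at each step every bit of the current string is flipped independently with probability $p$. *)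

theory Defs
  imports "HOL-Probability.Probability"
begin

text \<open>Bit strings of length l are represented as bool lists of length l
  (True = 1). Group addition in Z_2^l is coordinatewise xor.\<close>

definition bitstrings :: "nat \<Rightarrow> bool list set" where
  "bitstrings l = {xs. length xs = l}"

definition bxor :: "bool list \<Rightarrow> bool list \<Rightarrow> bool list" where
  "bxor xs ys = map2 (\<noteq>) xs ys"

definition hweight :: "bool list \<Rightarrow> nat" where
  "hweight w = length (filter id w)"

definition unif_bits :: "nat \<Rightarrow> bool list pmf" where
  "unif_bits l = pmf_of_set (bitstrings l)"

definition step_law :: "nat \<Rightarrow> real \<Rightarrow> bool list pmf" where
  "step_law l p = embed_pmf (\<lambda>w. if length w = l
        then p ^ hweight w * (1 - p) ^ (l - hweight w) else 0)"

text \<open>Sample space: coordinate 0 is X_0 (uniform), coordinate t+1 is W_(t+1) (law mu),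
  all independent (infinite product measure).\<close>
definition walk_space :: "nat \<Rightarrow> real \<Rightarrow> (nat \<Rightarrow> bool list) measure" where
  "walk_space l p = PiM UNIV (\<lambda>i. measure_pmf (if i = 0 then unif_bits l else step_law l p))"

fun walk :: "(nat \<Rightarrow> bool list) \<Rightarrow> nat \<Rightarrow> bool list" where
  "walk \<omega> 0 = \<omega> 0"
| "walk \<omega> (Suc t) = bxor (walk \<omega> t) (\<omega> (Suc t))"

definition hit_time :: "nat \<Rightarrow> (nat \<Rightarrow> bool list) \<Rightarrow> ennreal" where
  "hit_time l \<omega> = (if \<exists>t. walk \<omega> t = replicate l True
      then of_nat (LEAST t. walk \<omega> t = replicate l True) else \<infinity>)"

end

theory Submission
  imports Defs
begin

text \<open>
  Put \<open>L = 1 - 2p\<close>. The \<open>n\<close>-step transition probabilities of the walk factor over the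
  bits: a bit has been flipped an odd number of times with probability \<open>(1 - L^n)/2\<close>.
  The uniform distribution is stationary, so \<open>P(X t = 1) = 2^-l\<close>, and splitting this event
  at the hitting time \<open>T = s \<le> t\<close> yields the renewal equation
  \<open>(\<Sum>s\<le>t. P(T = s) * (1 + L^(t-s))^l) = 1\<close>.
  By the binomial theorem \<open>(1 + L^m)^l = 1 + c m\<close> with \<open>c m = (\<Sum>j=1..l. C(l,j) * L^(j*m))\<close>,
  so \<open>P(T > t)\<close> is the convolution of \<open>P(T = \<cdot>)\<close> with \<open>c\<close>. The partial sums of \<open>c\<close> converge
  to \<open>\<Sum>j=1..l. C(l,j) / (1 - L^j)\<close>, hence \<open>(\<Sum>t. P(T > t))\<close> equals \<open>P(T < \<infinity>)\<close> times this
  constant; in particular \<open>P(T > t) \<rightarrow> 0\<close>, so \<open>P(T < \<infinity>) = 1\<close> and \<open>E T = (\<Sum>t. P(T > t))\<close>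
  is the claimed sum.
\<close>

section \<open>Bit strings and the step law\<close>

lemma finite_bitstrings: "finite (bitstrings l)"
  using finite_lists_length_eq[of "UNIV :: bool set" l] by (simp add: bitstrings_def)

lemma card_bitstrings: "card (bitstrings l) = 2 ^ l"
  using card_lists_length_eq[of "UNIV :: bool set" l] by (simp add: bitstrings_def)

lemma bitstrings_nonempty: "bitstrings l \<noteq> {}"
  by (auto simp: bitstrings_def intro!: exI[of _ "replicate l True"])

lemma sum_lists_length_prod_list:
  fixes fs :: "('a::finite \<Rightarrow> 'b::comm_semiring_1) list"
  shows "(\<Sum>w | length w = length fs. prod_list (map2 (\<lambda>f b. f b) fs w))
       = prod_list (map (\<lambda>f. \<Sum>b\<in>UNIV. f b) fs)"
proof (induction fs)
  case Nil
  then show ?case by simp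
next
  case (Cons f fs)
  have lists_Suc: "{w. length w = length (f # fs)} = (\<lambda>(b, w). b # w) ` (UNIV \<times> {w. length w = length fs})"
    by (auto simp: image_iff length_Suc_conv)
  have "inj_on (\<lambda>(b, w). b # w) (UNIV \<times> {w :: 'a list. length w = length fs})"
    by (auto simp: inj_on_def)
  then have "(\<Sum>w | length w = length (f # fs). prod_list (map2 (\<lambda>f b. f b) (f # fs) w))
      = (\<Sum>(b, w)\<in>UNIV \<times> {w. length w = length fs}. f b * prod_list (map2 (\<lambda>f b. f b) fs w))"
    unfolding lists_Suc by (subst sum.reindex) (simp_all add: case_prod_unfold)
  also have "\<dots> = (\<Sum>b\<in>UNIV. f b) * (\<Sum>w | length w = length fs. prod_list (map2 (\<lambda>f b. f b) fs w))"
    by (simp add: sum.cartesian_product[symmetric] sum_product)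
  finally show ?case by (simp add: Cons.IH)
qed

lemma length_bxor [simp]: "length (bxor x y) = min (length x) (length y)"
  by (simp add: bxor_def)

lemma bxor_Nil [simp]: "bxor [] y = []"
  by (simp add: bxor_def)

lemma bxor_Cons [simp]: "bxor (a # x) (b # y) = (a \<noteq> b) # bxor x y"
  by (simp add: bxor_def)

lemma bxor_replicate_False: "length x = n \<Longrightarrow> bxor x (replicate n False) = x"
  by (induction x arbitrary: n) (auto simp: Suc_length_conv)

lemma bxor_eq_iff:
  "length x = length w \<Longrightarrow> length x = length y \<Longrightarrow> bxor x w = y \<longleftrightarrow> w = bxor x y"
proof (induction x arbitrary: w y)
  case (Cons a x)
  then obtain b w' c y' where "w = b # w'" "y = c # y'"
    by (metis length_Suc_conv)
  with Cons show ?case by auto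
qed simp

lemma hweight_Cons [simp]: "hweight (b # w) = (if b then 1 else 0) + hweight w"
  by (simp add: hweight_def)

lemma hweight_le_length: "hweight w \<le> length w"
  by (simp add: hweight_def)

definition flip_prob :: "real \<Rightarrow> bool \<Rightarrow> real" where
  "flip_prob p b = (if b then p else 1 - p)"

lemma prod_list_flip_prob:
  "prod_list (map (flip_prob p) w) = p ^ hweight w * (1 - p) ^ (length w - hweight w)"
proof (induction w)
  case (Cons b w)
  then show ?case
    using hweight_le_length[of w] by (simp add: flip_prob_def Suc_diff_le)
qed (simp add: hweight_def)

lemma sum_flip_prob_bxor:
  assumes "length y = l"
  shows "(\<Sum>x\<in>bitstrings l. prod_list (map (flip_prob p) (bxor x y))) = 1"
proof -
  let ?fs = "map (\<lambda>v b. flip_prob p (b \<noteq> v)) y"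
  have "map (flip_prob p) (bxor x y) = map2 (\<lambda>f b. f b) ?fs x" if "length x = length y" for x
    using that by (induction x y rule: list_induct2) auto
  then have "(\<Sum>x\<in>bitstrings l. prod_list (map (flip_prob p) (bxor x y)))
      = (\<Sum>x | length x = length ?fs. prod_list (map2 (\<lambda>f b. f b) ?fs x))"
    using assms by (intro sum.cong) (auto simp: bitstrings_def)
  also have "\<dots> = 1"
    unfolding sum_lists_length_prod_list by (induction y) (simp_all add: UNIV_bool flip_prob_def)
  finally show ?thesis .
qed

lemma pmf_step_law:
  assumes "0 \<le> p" "p \<le> 1"
  shows "pmf (step_law l p) w = (if length w = l then prod_list (map (flip_prob p) w) else 0)"
proof -
  let ?\<mu> = "\<lambda>w. if length w = l then prod_list (map (flip_prob p) w) else 0"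
  have \<mu>_nonneg: "0 \<le> ?\<mu> w" for w
    using assms by (simp add: prod_list_flip_prob)
  have "(\<Sum>w\<in>bitstrings l. ?\<mu> w) = (\<Sum>w\<in>bitstrings l. prod_list (map (flip_prob p) (bxor w (replicate l False))))"
    by (intro sum.cong) (auto simp: bitstrings_def bxor_replicate_False)
  also have "\<dots> = 1"
    by (rule sum_flip_prob_bxor) simp
  finally have sum_\<mu>: "(\<Sum>w\<in>bitstrings l. ?\<mu> w) = 1" .
  have "(\<integral>\<^sup>+w. ennreal (?\<mu> w) \<partial>count_space UNIV) = (\<Sum>w\<in>bitstrings l. ennreal (?\<mu> w))"
    using finite_bitstrings[of l] by (intro nn_integral_count_space') (auto simp: bitstrings_def)
  also have "\<dots> = 1"
    using \<mu>_nonneg sum_\<mu> by (simp add: sum_ennreal)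
  finally have "(\<integral>\<^sup>+w. ennreal (?\<mu> w) \<partial>count_space UNIV) = 1" .
  moreover have "(\<lambda>w. if length w = l then p ^ hweight w * (1 - p) ^ (l - hweight w) else 0) = ?\<mu>"
    by (auto simp: prod_list_flip_prob)
  ultimately show ?thesis
    unfolding step_law_def using \<mu>_nonneg by (simp add: pmf_embed_pmf)
qed

lemma set_pmf_step_law:
  assumes "0 < p" "p < 1"
  shows "set_pmf (step_law l p) = bitstrings l"
  using assms by (auto simp: set_pmf_eq pmf_step_law prod_list_flip_prob bitstrings_def)

lemma pmf_unif_bits: "pmf (unif_bits l) w = (if length w = l then 1 / 2 ^ l else 0)"
  using bitstrings_nonempty[of l] finite_bitstrings[of l]
  by (simp add: unif_bits_def card_bitstrings) (simp add: bitstrings_def)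

lemma set_pmf_unif_bits: "set_pmf (unif_bits l) = bitstrings l"
  using bitstrings_nonempty[of l] finite_bitstrings[of l] by (simp add: unif_bits_def)

text \<open>With \<open>L = 1 - 2p\<close>, after \<open>n\<close> steps each bit has been flipped an odd number of times
  with probability \<open>(1 - L^n)/2\<close>, independently of the other bits.\<close>
definition flip_kernel :: "real \<Rightarrow> nat \<Rightarrow> bool list \<Rightarrow> bool list \<Rightarrow> real" where
  "flip_kernel L n x y =
     prod_list (map2 (\<lambda>u v. if u = v then (1 + L ^ n) / 2 else (1 - L ^ n) / 2) x y)"

lemma flip_kernel_0: "length x = length y \<Longrightarrow> flip_kernel L 0 x y = (if x = y then 1 else 0)"
  by (induction x y rule: list_induct2) (auto simp: flip_kernel_def)

lemma flip_kernel_diag: "flip_kernel L n x x = ((1 + L ^ n) / 2) ^ length x"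
  by (induction x) (auto simp: flip_kernel_def)

lemma prod_list_map2_mult_flip_prob_bxor:
  "length x0 = length x \<Longrightarrow> length x = length y \<Longrightarrow>
   prod_list (map2 g x0 x) * prod_list (map (flip_prob p) (bxor x y))
   = prod_list (map2 (\<lambda>f b. f b) (map2 (\<lambda>u v b. g u b * flip_prob p (b \<noteq> v)) x0 y) x)"
proof (induction x0 arbitrary: x y)
  case (Cons a x0)
  then obtain b x' c y' where "x = b # x'" "y = c # y'"
    by (metis length_Suc_conv)
  with Cons show ?case by (auto simp: algebra_simps)
qed simp

lemma flip_kernel_Suc:
  assumes "length x0 = l" "length y = l"
  shows "(\<Sum>x\<in>bitstrings l. flip_kernel (1 - 2 * p) n x0 x * prod_list (map (flip_prob p) (bxor x y)))
       = flip_kernel (1 - 2 * p) (Suc n) x0 y"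
proof -
  define L where "L = 1 - 2 * p"
  define g where "g u v = (if u = v then (1 + L ^ n) / 2 else (1 - L ^ n) / 2)" for u v :: bool
  let ?fs = "map2 (\<lambda>u v b. g u b * flip_prob p (b \<noteq> v)) x0 y"
  have "(\<Sum>x\<in>bitstrings l. flip_kernel L n x0 x * prod_list (map (flip_prob p) (bxor x y)))
      = (\<Sum>x | length x = length ?fs. prod_list (map2 (\<lambda>f b. f b) ?fs x))"
    using assms by (intro sum.cong)
      (auto simp: bitstrings_def flip_kernel_def g_def[symmetric] prod_list_map2_mult_flip_prob_bxor)
  also have "\<dots> = prod_list (map (\<lambda>f. \<Sum>b\<in>UNIV. f b) ?fs)"
    by (rule sum_lists_length_prod_list)
  also have "\<dots> = flip_kernel L (Suc n) x0 y"
    unfolding flip_kernel_def map_map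
    by (intro arg_cong[where f = prod_list] map_cong refl)
      (auto simp: UNIV_bool g_def flip_prob_def L_def field_simps)
  finally show ?thesis by (simp add: L_def)
qed

section \<open>A discrete renewal lemma\<close>

lemma tendsto_convolution:
  fixes f c :: "nat \<Rightarrow> 'a::{real_normed_algebra, banach}"
  assumes f: "summable (\<lambda>s. norm (f s))" and c_bounded: "\<And>n. norm (c n) \<le> B" and c: "c \<longlonglongrightarrow> C"
  shows "(\<lambda>N. \<Sum>s\<le>N. f s * c (N - s)) \<longlonglongrightarrow> suminf f * C"
proof -
  define a where "a s N = (if s \<le> N then f s * c (N - s) else 0)" for s N
  have "(\<lambda>N. \<Sum>s. a s N) \<longlonglongrightarrow> (\<Sum>s. f s * C)"
  proof (rule tannerys_theorem[where M = "\<lambda>s. norm (f s) * B", THEN conjunct2, THEN conjunct2])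
    fix s
    have "(\<lambda>n. a s (n + s)) = (\<lambda>n. f s * c n)"
      by (simp add: a_def)
    then have "(\<lambda>n. a s (n + s)) \<longlonglongrightarrow> f s * C"
      using c by (simp add: tendsto_mult_left)
    then show "(\<lambda>N. a s N) \<longlonglongrightarrow> f s * C"
      by (rule LIMSEQ_offset)
  next
    have B: "0 \<le> B"
      by (rule order_trans[OF norm_ge_zero c_bounded])
    have "norm (f s * c (N - s)) \<le> norm (f s) * B" for s N
      using norm_mult_ineq[of "f s" "c (N - s)"] mult_left_mono[OF c_bounded[of "N - s"], of "norm (f s)"]
      by (rule order_trans) simp
    then have "norm (a s N) \<le> norm (f s) * B" for s N
      using B by (simp add: a_def)
    then show "\<forall>\<^sub>F (s, N) in at_top \<times>\<^sub>F sequentially. norm (a s N) \<le> norm (f s) * B"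
      by (intro always_eventually allI) (simp add: case_prod_unfold)
    next
    show "summable (\<lambda>s. norm (f s) * B)"
      using f by (rule summable_mult2)
  qed simp
  moreover have "(\<Sum>s. a s N) = (\<Sum>s\<le>N. f s * c (N - s))" for N
    by (subst suminf_finite[of "{..N}"]) (auto simp: a_def)
  moreover have "(\<Sum>s. f s * C) = suminf f * C"
    using f by (simp add: suminf_mult2 summable_norm_cancel)
  ultimately show ?thesis by simp
qed

lemma sum_triangle_swap:
  fixes h :: "nat \<Rightarrow> nat \<Rightarrow> 'a::comm_monoid_add"
  shows "(\<Sum>t\<le>N. \<Sum>s\<le>t. h s (t - s)) = (\<Sum>s\<le>N. \<Sum>k\<le>N - s. h s k)"
proof -
  have "{(s, k). s + k \<le> N} = Sigma {..N} (\<lambda>s. {..N - s})"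
    by auto
  then show ?thesis
    by (simp add: sum.triangle_reindex_eq[symmetric] sum.Sigma)
qed

lemma abs_geometric_partial_sum_le:
  fixes x :: real
  assumes "\<bar>x\<bar> < 1"
  shows "\<bar>\<Sum>k<n. x ^ k\<bar> \<le> 1 / (1 - \<bar>x\<bar>)"
proof -
  have "\<bar>\<Sum>k<n. x ^ k\<bar> \<le> (\<Sum>k<n. \<bar>x\<bar> ^ k)"
    by (rule order_trans[OF sum_abs]) (simp add: power_abs)
  also have "\<dots> = (1 - \<bar>x\<bar> ^ n) / (1 - \<bar>x\<bar>)"
    using assms by (simp add: sum_gp_strict)
  also have "\<dots> \<le> 1 / (1 - \<bar>x\<bar>)"
    using assms by (intro divide_right_mono) auto
  finally show ?thesis .
qed

lemma
  fixes a r :: "'j \<Rightarrow> real"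
  assumes "finite J" and r: "\<And>j. j \<in> J \<Longrightarrow> \<bar>r j\<bar> < 1"
  shows tendsto_sum_geometric_partial_sums:
      "(\<lambda>n. \<Sum>j\<in>J. a j * (\<Sum>m<n. r j ^ m)) \<longlonglongrightarrow> (\<Sum>j\<in>J. a j / (1 - r j))"
    and abs_sum_geometric_partial_sums_le:
      "\<bar>\<Sum>j\<in>J. a j * (\<Sum>m<n. r j ^ m)\<bar> \<le> (\<Sum>j\<in>J. \<bar>a j\<bar> / (1 - \<bar>r j\<bar>))"
proof -
  show "(\<lambda>n. \<Sum>j\<in>J. a j * (\<Sum>m<n. r j ^ m)) \<longlonglongrightarrow> (\<Sum>j\<in>J. a j / (1 - r j))"
    unfolding divide_inverse
  proof (intro tendsto_sum tendsto_mult tendsto_const)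
    fix j assume "j \<in> J"
    then have "(\<lambda>m. r j ^ m) sums (1 / (1 - r j))"
      using r by (intro geometric_sums) simp
    then show "(\<lambda>n. \<Sum>m<n. r j ^ m) \<longlonglongrightarrow> inverse (1 - r j)"
      by (simp add: sums_def inverse_eq_divide)
  qed
  show "\<bar>\<Sum>j\<in>J. a j * (\<Sum>m<n. r j ^ m)\<bar> \<le> (\<Sum>j\<in>J. \<bar>a j\<bar> / (1 - \<bar>r j\<bar>))"
  proof (rule order_trans[OF sum_abs sum_mono])
    fix j assume "j \<in> J"
    then have "\<bar>a j\<bar> * \<bar>\<Sum>m<n. r j ^ m\<bar> \<le> \<bar>a j\<bar> * (1 / (1 - \<bar>r j\<bar>))"
      using r by (intro mult_left_mono abs_geometric_partial_sum_le) auto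
    then show "\<bar>a j * (\<Sum>m<n. r j ^ m)\<bar> \<le> \<bar>a j\<bar> / (1 - \<bar>r j\<bar>)"
      by (simp add: abs_mult)
  qed
qed

lemma one_plus_power_eq:
  fixes x :: "'a::comm_ring_1"
  shows "(1 + x) ^ l = 1 + (\<Sum>j = 1..l. of_nat (l choose j) * x ^ j)"
proof -
  have "{..l} = insert 0 {1..l}"
    by auto
  then show ?thesis
    using binomial_ring[of x 1 l] by (simp add: add.commute)
qed

lemma renewal_tail_sums:
  fixes f :: "nat \<Rightarrow> real" and L :: real
  assumes f_nonneg: "\<And>s. 0 \<le> f s" and F_le_1: "\<And>t. (\<Sum>s\<le>t. f s) \<le> 1" and L: "\<bar>L\<bar> < 1"
    and renewal: "\<And>t. (\<Sum>s\<le>t. f s * (1 + L ^ (t - s)) ^ l) = 1"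
  shows "(\<lambda>t. 1 - (\<Sum>s\<le>t. f s)) sums (\<Sum>j = 1..l. real (l choose j) / (1 - L ^ j))"
proof -
  define c where "c m = (\<Sum>j = 1..l. real (l choose j) * (L ^ j) ^ m)" for m
  define C where "C n = (\<Sum>j = 1..l. real (l choose j) * (\<Sum>m<n. (L ^ j) ^ m))" for n
  define C_lim where "C_lim = (\<Sum>j = 1..l. real (l choose j) / (1 - L ^ j))"
  define F where "F t = (\<Sum>s\<le>t. f s)" for t
  have L_pow: "\<bar>L ^ j\<bar> < 1" if "j \<in> {1..l}" for j
    using that L power_decreasing[of 1 j "\<bar>L\<bar>"] by (auto simp: power_abs)
  have "(1 + L ^ m) ^ l = 1 + c m" for m
    by (simp add: one_plus_power_eq c_def power_mult[symmetric] mult.commute)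
  then have tail: "1 - F t = (\<Sum>s\<le>t. f s * c (t - s))" for t
    using renewal[of t] by (simp add: F_def algebra_simps sum.distrib)
  have "C (Suc n) = (\<Sum>m\<le>n. c m)" for n
    unfolding C_def c_def by (subst sum.swap) (simp add: sum_distrib_left lessThan_Suc_atMost)
  then have partial_tail_sums: "(\<Sum>t\<le>N. 1 - F t) = (\<Sum>s\<le>N. f s * C (Suc (N - s)))" for N
    unfolding tail using sum_triangle_swap[of "\<lambda>s k. f s * c k" N] by (simp add: sum_distrib_left)
  have "C \<longlonglongrightarrow> C_lim"
    unfolding C_def C_lim_def using L_pow by (intro tendsto_sum_geometric_partial_sums) auto
  then have C_Suc: "(\<lambda>n. C (Suc n)) \<longlonglongrightarrow> C_lim"
    by (rule LIMSEQ_Suc)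
  have C_bounded: "norm (C (Suc n)) \<le> (\<Sum>j = 1..l. \<bar>real (l choose j)\<bar> / (1 - \<bar>L ^ j\<bar>))" for n
    unfolding C_def real_norm_def using L_pow by (intro abs_sum_geometric_partial_sums_le) auto
  have "summable f"
  proof (rule summableI_nonneg_bounded[OF f_nonneg])
    show "sum f {..<n} \<le> 1" for n
      using F_le_1[of "n - 1"] by (cases n) (simp_all add: lessThan_Suc_atMost)
  qed
  then have "(\<lambda>N. \<Sum>s\<le>N. f s * C (Suc (N - s))) \<longlonglongrightarrow> suminf f * C_lim"
    using f_nonneg by (intro tendsto_convolution[OF _ C_bounded C_Suc]) simp
  then have tail_sums: "(\<lambda>t. 1 - F t) sums (suminf f * C_lim)"
    unfolding sums_def partial_tail_sums[symmetric]
    by (subst filterlim_sequentially_Suc[symmetric]) (simp add: lessThan_Suc_atMost)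
  have "(\<lambda>t. 1 - F t) \<longlonglongrightarrow> 0"
    using tail_sums by (intro summable_LIMSEQ_zero sums_summable)
  moreover have "(\<lambda>t. 1 - F t) \<longlonglongrightarrow> 1 - suminf f"
    using LIMSEQ_Suc[OF summable_LIMSEQ[OF \<open>summable f\<close>]]
    by (intro tendsto_diff tendsto_const) (simp add: F_def lessThan_Suc_atMost)
  ultimately have "suminf f = 1"
    using LIMSEQ_unique by fastforce
  with tail_sums show ?thesis
    by (simp add: F_def C_lim_def)
qed

lemma measurable_count_space_compose2:
  fixes f :: "'a \<Rightarrow> 'b::countable" and g :: "'a \<Rightarrow> 'c::countable"
  assumes "f \<in> M \<rightarrow>\<^sub>M count_space UNIV" and "g \<in> M \<rightarrow>\<^sub>M count_space UNIV"
  shows "(\<lambda>x. h (f x) (g x)) \<in> M \<rightarrow>\<^sub>M count_space UNIV"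
  using measurable_compose[OF assms(2) measurable_count_space]
  by (rule measurable_compose_countable[OF _ assms(1)])

lemma pred_restrict_subset:
  assumes "Measurable.pred (PiM A N) E" and "\<And>\<omega>. E (restrict \<omega> A) = E \<omega>" and "A \<subseteq> B"
  shows "Measurable.pred (PiM B N) E"
  using measurable_compose[OF measurable_restrict_subset[OF \<open>A \<subseteq> B\<close>] assms(1)] assms(2)
  by (simp add: o_def)

lemma (in product_prob_space) indep_vars_components: "P.indep_vars M (\<lambda>i \<omega>. \<omega> i) I"
proof (cases "I = {}")
  case True
  show ?thesis
    unfolding P.indep_vars_def P.indep_sets_def using True by simp
next
  case False
  have "distr (PiM I M) (PiM I M) (\<lambda>\<omega>. restrict \<omega> I) = distr (PiM I M) (PiM I M) (\<lambda>\<omega>. \<omega>)"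
    by (rule distr_cong) (auto simp: space_PiM)
  also have "\<dots> = PiM I (\<lambda>i. distr (PiM I M) (M i) (\<lambda>\<omega>. \<omega> i))"
    by (auto simp: PiM_component intro!: PiM_cong)
  finally show ?thesis
    by (subst P.indep_vars_iff_distr_eq_PiM'[OF False]) simp_all
qed

lemma (in product_prob_space) prob_restrict_indep:
  assumes "A \<inter> B = {}" "A \<subseteq> I" "B \<subseteq> I"
    and E: "Measurable.pred (PiM A M) E" and F: "Measurable.pred (PiM B M) F"
  shows "P.prob {\<omega>\<in>space (PiM I M). E (restrict \<omega> A) \<and> F (restrict \<omega> B)}
       = P.prob {\<omega>\<in>space (PiM I M). E (restrict \<omega> A)} * P.prob {\<omega>\<in>space (PiM I M). F (restrict \<omega> B)}"
proof -
  have "P.indep_var (PiM A M) (\<lambda>\<omega>. restrict \<omega> A) (PiM B M) (\<lambda>\<omega>. restrict \<omega> B)"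
    using P.indep_var_restrict[OF indep_vars_components assms(1-3)] by simp
  then have "P.indep_var (count_space UNIV) (E \<circ> (\<lambda>\<omega>. restrict \<omega> A)) (count_space UNIV) (F \<circ> (\<lambda>\<omega>. restrict \<omega> B))"
    using E F by (rule P.indep_var_compose)
  from P.indep_varD[OF this, of "{True}" "{True}"] show ?thesis
    by (simp add: vimage_def Int_def conj_commute)
qed

lemma Least_eq_suminf_indicator:
  "(if \<exists>t. Q t then of_nat (LEAST t. Q t) else \<infinity>) = (\<Sum>t. of_bool (\<forall>k\<le>t. \<not> Q k) :: ennreal)"
proof (cases "\<exists>t. Q t")
  case True
  define n where "n = (LEAST t. Q t)"
  have "(\<forall>k\<le>t. \<not> Q k) \<longleftrightarrow> t < n" for t
    unfolding n_def by (metis LeastI_ex[OF True] Least_le not_less_Least leD le_trans not_le)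
  then have "(\<Sum>t. of_bool (\<forall>k\<le>t. \<not> Q k) :: ennreal) = (\<Sum>t<n. 1)"
    by (subst suminf_finite[of "{..<n}"]) auto
  then show ?thesis
    using True by (simp add: n_def)
next
  case False
  have "(\<Sum>t. ennreal 1) = \<infinity>"
    using summable_iff_suminf_neq_top[of "\<lambda>_. 1"] by (simp add: summable_const_iff)
  with False show ?thesis
    by simp
qed

section \<open>The walk\<close>

definition walk_coord :: "nat \<Rightarrow> real \<Rightarrow> nat \<Rightarrow> bool list measure" where
  "walk_coord l p i = measure_pmf (if i = 0 then unif_bits l else step_law l p)"

lemma walk_space_eq_PiM: "walk_space l p = PiM UNIV (walk_coord l p)"
  unfolding walk_space_def walk_coord_def[abs_def] ..

lemma space_walk_coord [simp]: "space (walk_coord l p i) = UNIV"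
  by (simp add: walk_coord_def)

lemma sets_walk_coord [simp]: "sets (walk_coord l p i) = UNIV"
  by (simp add: walk_coord_def)

lemma measurable_walk_coord [simp]: "measurable N (walk_coord l p i) = measurable N (count_space UNIV)"
  by (rule measurable_cong_sets) simp_all

lemma measurable_walk_component [measurable]:
  "i \<in> A \<Longrightarrow> (\<lambda>\<omega>. \<omega> i) \<in> measurable (PiM A (walk_coord l p)) (count_space UNIV)"
  using measurable_component_singleton[of i A "walk_coord l p"] by simp

lemma measurable_walk [measurable]:
  "{..t} \<subseteq> A \<Longrightarrow> (\<lambda>\<omega>. walk \<omega> t) \<in> measurable (PiM A (walk_coord l p)) (count_space UNIV)"
proof (induction t)
  case 0
  then show ?case by simp
next
  case (Suc t)
  then have "(\<lambda>\<omega>. walk \<omega> t) \<in> PiM A (walk_coord l p) \<rightarrow>\<^sub>M count_space UNIV"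
    and "(\<lambda>\<omega>. \<omega> (Suc t)) \<in> PiM A (walk_coord l p) \<rightarrow>\<^sub>M count_space UNIV"
    by (simp_all add: atMost_Suc)
  then show ?case
    unfolding walk.simps by (rule measurable_count_space_compose2)
qed

lemma walk_restrict [simp]: "{..t} \<subseteq> A \<Longrightarrow> walk (restrict \<omega> A) t = walk \<omega> t"
  by (induction t) (simp_all add: atMost_Suc)

lemma length_walk: "(\<And>i. length (\<omega> i) = l) \<Longrightarrow> length (walk \<omega> t) = l"
  by (induction t) simp_all

locale bit_flip_walk =
  fixes l :: nat and p :: real
  assumes p_pos: "0 < p" and p_less_1: "p < 1"
begin

sublocale product_prob_space "walk_coord l p" UNIV
  by (intro product_prob_spaceI) (simp add: walk_coord_def measure_pmf.prob_space_axioms)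

abbreviation M :: "(nat \<Rightarrow> bool list) measure" where
  "M \<equiv> PiM UNIV (walk_coord l p)"

lemma space_M [simp]: "space M = UNIV"
  by (simp add: space_PiM)

lemma prob_coordinate: "P.prob {\<omega>. \<omega> i = w} = pmf (if i = 0 then unif_bits l else step_law l p) w"
  using emeasure_PiM_Collect_single[of i "{w}"]
  by (simp add: P.emeasure_eq_measure walk_coord_def measure_pmf.emeasure_eq_measure measure_pmf_single)

lemma AE_length: "AE \<omega> in M. \<forall>i. length (\<omega> i) = l"
proof -
  have "AE w in walk_coord l p i. length w = l" for i
    unfolding walk_coord_def using set_pmf_step_law[OF p_pos p_less_1, of l] set_pmf_unif_bits[of l]
    by (intro AE_pmfI) (auto simp: bitstrings_def split: if_splits)
  then have "AE \<omega> in M. length (\<omega> i) = l" for i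
    by (rule AE_component[OF UNIV_I])
  then show ?thesis
    by (simp add: AE_all_countable)
qed

lemma events_Collect:
  assumes "Measurable.pred M E"
  shows "{\<omega>. E \<omega>} \<in> P.events"
  using predE[OF assms] by simp

definition past_event :: "nat \<Rightarrow> ((nat \<Rightarrow> bool list) \<Rightarrow> bool) \<Rightarrow> bool" where
  "past_event k E \<longleftrightarrow> Measurable.pred (PiM {..k} (walk_coord l p)) E \<and> (\<forall>\<omega>. E (restrict \<omega> {..k}) = E \<omega>)"

lemma past_event_mono: "past_event k E \<Longrightarrow> k \<le> k' \<Longrightarrow> past_event k' E"
  unfolding past_event_def
  by (metis atMost_subset_iff pred_restrict_subset restrict_restrict inf.absorb_iff2)

lemma pred_past_event: "past_event k E \<Longrightarrow> Measurable.pred M E"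
  unfolding past_event_def using pred_restrict_subset by blast

lemma past_event_conj_walk: "past_event k E \<Longrightarrow> past_event k (\<lambda>\<omega>. E \<omega> \<and> walk \<omega> k = x)"
  unfolding past_event_def by auto measurable

lemma prob_past_event_step:
  assumes "past_event k E"
  shows "P.prob {\<omega>. E \<omega> \<and> \<omega> (Suc k) = w} = P.prob {\<omega>. E \<omega>} * pmf (step_law l p) w"
proof -
  from assms have E: "Measurable.pred (PiM {..k} (walk_coord l p)) E"
    and E_local: "\<And>\<omega>. E (restrict \<omega> {..k}) = E \<omega>"
    unfolding past_event_def by auto
  have "Measurable.pred (PiM {Suc k} (walk_coord l p)) (\<lambda>\<omega>. \<omega> (Suc k) = w)"
    by measurable
  from prob_restrict_indep[OF _ _ _ E this] show ?thesis
    by (simp add: E_local prob_coordinate)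
qed

lemma prob_walk_Suc:
  assumes E: "past_event k E" and y: "length y = l"
  shows "P.prob {\<omega>. E \<omega> \<and> walk \<omega> (Suc k) = y}
       = (\<Sum>x\<in>bitstrings l. P.prob {\<omega>. E \<omega> \<and> walk \<omega> k = x} * pmf (step_law l p) (bxor x y))"
proof -
  let ?A = "\<lambda>x. {\<omega>. E \<omega> \<and> walk \<omega> k = x \<and> \<omega> (Suc k) = bxor x y}"
  have [measurable]: "Measurable.pred M E"
    using E by (rule pred_past_event)
  have events: "{\<omega>. E \<omega> \<and> walk \<omega> (Suc k) = y} \<in> P.events" "?A x \<in> P.events" for x
    by (intro events_Collect; measurable)+
  have "P.prob {\<omega>. E \<omega> \<and> walk \<omega> (Suc k) = y} = P.prob (\<Union>x\<in>bitstrings l. ?A x)"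
  proof (rule measure_eq_AE)
    show "AE \<omega> in M. (\<omega> \<in> {\<omega>. E \<omega> \<and> walk \<omega> (Suc k) = y}) = (\<omega> \<in> (\<Union>x\<in>bitstrings l. ?A x))"
      using AE_length
    proof eventually_elim
      case (elim \<omega>)
      then have "length (walk \<omega> k) = l"
        by (intro length_walk) simp
      with elim y show ?case
        by (auto simp: bitstrings_def bxor_eq_iff)
    qed
  qed (use events finite_bitstrings in auto)
  also have "\<dots> = (\<Sum>x\<in>bitstrings l. P.prob (?A x))"
    using events by (intro P.finite_measure_finite_Union) (auto simp: finite_bitstrings disjoint_family_on_def)
  also have "\<dots> = (\<Sum>x\<in>bitstrings l. P.prob {\<omega>. E \<omega> \<and> walk \<omega> k = x} * pmf (step_law l p) (bxor x y))"
    by (simp add: prob_past_event_step[OF past_event_conj_walk[OF E], unfolded conj_assoc])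
  finally show ?thesis .
qed

lemma prob_walk: "length y = l \<Longrightarrow> P.prob {\<omega>. walk \<omega> t = y} = 1 / 2 ^ l"
proof (induction t arbitrary: y)
  case 0
  then show ?case
    by (simp add: prob_coordinate pmf_unif_bits)
next
  case (Suc t)
  have "past_event t (\<lambda>_. True)"
    by (simp add: past_event_def)
  from prob_walk_Suc[OF this Suc.prems] have "P.prob {\<omega>. walk \<omega> (Suc t) = y}
      = (\<Sum>x\<in>bitstrings l. prod_list (map (flip_prob p) (bxor x y))) / 2 ^ l"
    using Suc p_pos p_less_1 by (simp add: bitstrings_def pmf_step_law sum_divide_distrib)
  also have "\<dots> = 1 / 2 ^ l"
    by (simp add: sum_flip_prob_bxor Suc.prems)
  finally show ?case .
qed

lemma prob_walk_after:
  assumes E: "past_event s E" and E_at: "\<And>\<omega>. E \<omega> \<Longrightarrow> walk \<omega> s = x" and x: "length x = l"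
    and y: "length y = l"
  shows "P.prob {\<omega>. E \<omega> \<and> walk \<omega> (s + n) = y} = P.prob {\<omega>. E \<omega>} * flip_kernel (1 - 2 * p) n x y"
  using y
proof (induction n arbitrary: y)
  case 0
  then have "{\<omega>. E \<omega> \<and> walk \<omega> s = y} = (if x = y then {\<omega>. E \<omega>} else {})"
    using E_at by auto
  with 0 x show ?case
    by (simp add: flip_kernel_0)
next
  case (Suc n)
  have "past_event (s + n) E"
    using E by (rule past_event_mono) simp
  from prob_walk_Suc[OF this Suc.prems]
  have "P.prob {\<omega>. E \<omega> \<and> walk \<omega> (s + Suc n) = y}
      = (\<Sum>z\<in>bitstrings l. P.prob {\<omega>. E \<omega> \<and> walk \<omega> (s + n) = z} * pmf (step_law l p) (bxor z y))"
    by simp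
  also have "\<dots> = (\<Sum>z\<in>bitstrings l.
      P.prob {\<omega>. E \<omega>} * (flip_kernel (1 - 2 * p) n x z * prod_list (map (flip_prob p) (bxor z y))))"
    using Suc p_pos p_less_1 by (intro sum.cong) (auto simp: bitstrings_def pmf_step_law)
  also have "\<dots> = P.prob {\<omega>. E \<omega>} * flip_kernel (1 - 2 * p) (Suc n) x y"
    using x Suc.prems by (simp add: sum_distrib_left[symmetric] flip_kernel_Suc)
  finally show ?case .
qed

abbreviation ones :: "bool list" where
  "ones \<equiv> replicate l True"

definition first_hit :: "nat \<Rightarrow> (nat \<Rightarrow> bool list) \<Rightarrow> bool" where
  "first_hit s \<omega> \<longleftrightarrow> walk \<omega> s = ones \<and> (\<forall>k<s. walk \<omega> k \<noteq> ones)"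

lemma past_event_first_hit: "past_event s (first_hit s)"
  unfolding past_event_def first_hit_def by auto measurable

lemma first_hit_unique: "first_hit s \<omega> \<Longrightarrow> first_hit s' \<omega> \<Longrightarrow> s = s'"
  unfolding first_hit_def by (metis linorder_neqE_nat)

lemma first_hit_before:
  assumes "walk \<omega> t = ones"
  shows "\<exists>s\<le>t. first_hit s \<omega>"
proof (intro exI conjI)
  show "(LEAST s. walk \<omega> s = ones) \<le> t"
    using assms by (rule Least_le)
  show "first_hit (LEAST s. walk \<omega> s = ones) \<omega>"
    unfolding first_hit_def using assms by (auto intro: LeastI dest: not_less_Least)
qed

lemma pred_first_hit [measurable]: "Measurable.pred M (first_hit s)"
  by (rule pred_past_event[OF past_event_first_hit])

lemma events_first_hit: "{\<omega>. first_hit s \<omega>} \<in> P.events"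
  by (intro events_Collect pred_first_hit)

lemma prob_first_hit_before: "P.prob (\<Union>s\<le>t. {\<omega>. first_hit s \<omega>}) = (\<Sum>s\<le>t. P.prob {\<omega>. first_hit s \<omega>})"
  using events_first_hit first_hit_unique
  by (intro P.finite_measure_finite_Union) (auto simp: disjoint_family_on_def)

lemma renewal_equation:
  "(\<Sum>s\<le>t. P.prob {\<omega>. first_hit s \<omega>} * (1 + (1 - 2 * p) ^ (t - s)) ^ l) = 1"
proof -
  let ?B = "\<lambda>s. {\<omega>. first_hit s \<omega> \<and> walk \<omega> t = ones}"
  have events: "?B s \<in> P.events" for s
    by (intro events_Collect) measurable
  have "1 / 2 ^ l = P.prob {\<omega>. walk \<omega> t = ones}"
    by (simp add: prob_walk)
  also have "\<dots> = P.prob (\<Union>s\<le>t. ?B s)"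
    by (rule arg_cong[where f = P.prob]) (auto dest: first_hit_before)
  also have "\<dots> = (\<Sum>s\<le>t. P.prob (?B s))"
    using events first_hit_unique
    by (intro P.finite_measure_finite_Union) (auto simp: disjoint_family_on_def)
  also have "\<dots> = (\<Sum>s\<le>t. P.prob {\<omega>. first_hit s \<omega>} * flip_kernel (1 - 2 * p) (t - s) ones ones)"
  proof (rule sum.cong[OF refl])
    fix s assume "s \<in> {..t}"
    moreover have "P.prob {\<omega>. first_hit s \<omega> \<and> walk \<omega> (s + (t - s)) = ones}
        = P.prob {\<omega>. first_hit s \<omega>} * flip_kernel (1 - 2 * p) (t - s) ones ones"
      by (rule prob_walk_after[OF past_event_first_hit]) (auto simp: first_hit_def)
    ultimately show "P.prob (?B s) = P.prob {\<omega>. first_hit s \<omega>} * flip_kernel (1 - 2 * p) (t - s) ones ones"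
      by simp
  qed
  finally show ?thesis
    by (simp add: flip_kernel_diag power_divide sum_divide_distrib[symmetric])
qed

lemma prob_not_hit_until:
  "P.prob {\<omega>. \<forall>k\<le>t. walk \<omega> k \<noteq> ones} = 1 - (\<Sum>s\<le>t. P.prob {\<omega>. first_hit s \<omega>})"
proof -
  let ?H = "\<Union>s\<le>t. {\<omega>. first_hit s \<omega>}"
  have "(\<forall>k\<le>t. walk \<omega> k \<noteq> ones) \<longleftrightarrow> \<not> (\<exists>s\<le>t. first_hit s \<omega>)" for \<omega>
    using first_hit_before by (metis first_hit_def order_trans)
  then have "P.prob {\<omega>. \<forall>k\<le>t. walk \<omega> k \<noteq> ones} = P.prob (space M - ?H)"
    by (intro arg_cong[where f = P.prob]) auto
  also have "\<dots> = 1 - P.prob ?H"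
    using events_first_hit by (intro P.prob_compl) auto
  finally show ?thesis
    by (simp add: prob_first_hit_before)
qed

lemma hit_time_eq_suminf: "hit_time l \<omega> = (\<Sum>t. indicator {\<omega>. \<forall>k\<le>t. walk \<omega> k \<noteq> ones} \<omega>)"
  unfolding hit_time_def Least_eq_suminf_indicator by (simp add: indicator_def)

theorem nn_integral_hit_time:
  "(\<integral>\<^sup>+\<omega>. hit_time l \<omega> \<partial>M) = ennreal (\<Sum>j = 1..l. real (l choose j) / (1 - (1 - 2 * p) ^ j))"
proof -
  define f where "f s = P.prob {\<omega>. first_hit s \<omega>}" for s
  have F_le_1: "(\<Sum>s\<le>t. f s) \<le> 1" for t
  proof -
    have "(\<Sum>s\<le>t. f s) = P.prob (\<Union>s\<le>t. {\<omega>. first_hit s \<omega>})"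
      by (simp add: f_def prob_first_hit_before)
    also have "\<dots> \<le> 1"
      by (rule P.prob_le_1)
    finally show ?thesis .
  qed
  have tail: "(\<lambda>t. 1 - (\<Sum>s\<le>t. f s)) sums (\<Sum>j = 1..l. real (l choose j) / (1 - (1 - 2 * p) ^ j))"
    using F_le_1 renewal_equation p_pos p_less_1 by (intro renewal_tail_sums) (auto simp: f_def)
  have "(\<integral>\<^sup>+\<omega>. hit_time l \<omega> \<partial>M) = (\<Sum>t. emeasure M {\<omega>. \<forall>k\<le>t. walk \<omega> k \<noteq> ones})"
    unfolding hit_time_eq_suminf by (subst nn_integral_suminf) (simp_all add: events_Collect)
  also have "\<dots> = (\<Sum>t. ennreal (1 - (\<Sum>s\<le>t. f s)))"
    by (simp add: P.emeasure_eq_measure prob_not_hit_until f_def)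
  also have "\<dots> = ennreal (\<Sum>t. 1 - (\<Sum>s\<le>t. f s))"
    using F_le_1 sums_summable[OF tail] by (intro suminf_ennreal2) auto
  finally show ?thesis
    using sums_unique[OF tail] by simp
qed

end

theorem mainTheorem2:
  fixes l :: nat and p :: real
  assumes "l \<ge> 1" and "0 < p" and "p < 1"
  shows "(\<integral>\<^sup>+ \<omega>. hit_time l \<omega> \<partial>walk_space l p)
           = ennreal (\<Sum>j = 1..l. real (l choose j) / (1 - (1 - 2 * p) ^ j))"
proof -
  interpret bit_flip_walk l p
    using assms by unfold_locales
  show ?thesis
    unfolding walk_space_eq_PiM by (rule nn_integral_hit_time)
qed

end
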